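(* Consider the four-agent technology adoption game. There exists $\varepsilon_0>0$ such that for every $\varepsilon\in(0,\varepsilon_0)$ there is a nonempty open interval $J\subset(0,1)$ of costs such that for every $c\in J$: in the line network seeded via agent 1 there is an equilibrium in which the probability that all four agents adopt is strictly greater than the probability that all four adopt in every equilibrium of the cycle network seeded via agent 1.
   Context: Fix $\rho\in(0,1)$, $\varepsilon\in(0,1)$, agents $\{1,2,3,4\}$, state $\theta\in\{g,b\}$ with $\Pr(\theta=g)=\rho$. In state $b$ no messages are sent. In state $g$ messages travel along directed arcs, each transmission lost independently with probability $\varepsilon$, and an agent sends along her outgoing arcs only if she received at least one message. Line network seeded via 1: arcs $0\to1\to2\to3\to4$ (0 is the planner); each agent observes only whether she received a message. Cycle network (undirected cycle $1-2-3-4-1$) seeded via 1: arcs $0\to1$, $1\to2$, $1\to4$, $2\to3$, $4\to3$; agents $1,2,4$ observe whether they received a message; agent 3 observes which of the arcs $2\to3$, $4\to3$ delivered a message (types: only from 2, only from 4, from both, from neither). Technology adoption game with cost $c\in(0,1)$: each agent chooses $a_i\in\{0,1\}$ as a function of her information (possibly mixed); payoff $a_i(\mathbf 1[\theta=g\text{ and all four adopt}]-c)$; equilibria are Bayesian Nash equilibria. *)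

theory Defs
  imports Complex_Main
begin

text \<open>
A realization (world) is a pair (theta, xs): theta = True means state g, False means state b;
xs lists the independent success indicators of the transmissions along the arcs
(each arc succeeds with probability 1 - eps). In state b nothing is sent, so the arc
indicators are irrelevant there (summing over them is harmless).
\<close>

definition worlds :: "nat \<Rightarrow> (bool \<times> bool list) set" where
  "worlds k = UNIV \<times> {xs. length xs = k}"

definition wprob :: "real \<Rightarrow> real \<Rightarrow> bool \<times> bool list \<Rightarrow> real" where
  "wprob \<rho> \<epsilon> w = (if fst w then \<rho> else 1 - \<rho>) *
      prod_list (map (\<lambda>x. if x then 1 - \<epsilon> else \<epsilon>) (snd w))"

record network =
  narcs :: nat
  sig :: "nat \<Rightarrow> bool \<times> bool list \<Rightarrow> nat"
  sigset :: "nat \<Rightarrow> nat set"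

definition agents :: "nat set" where "agents = {1,2,3,4}"

text \<open>Line network: arcs xs!0 = 0->1, xs!1 = 1->2, xs!2 = 2->3, xs!3 = 3->4.
  Agent i receives a message iff state g and all arcs up to her succeed. Signal 1 = received.\<close>
definition line_sig :: "nat \<Rightarrow> bool \<times> bool list \<Rightarrow> nat" where
  "line_sig i w = (if fst w \<and> (\<forall>j<i. snd w ! j) then 1 else 0)"

definition line_net :: network where
  "line_net = \<lparr> narcs = 4, sig = line_sig, sigset = (\<lambda>i. {0,1}) \<rparr>"

text \<open>Cycle network: arcs xs!0 = 0->1, xs!1 = 1->2, xs!2 = 1->4, xs!3 = 2->3, xs!4 = 4->3.
  Agents 1,2,4: signal 1 iff received.\<close>
definition cycle_sig :: "nat \<Rightarrow> bool \<times> bool list \<Rightarrow> nat" where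
  "cycle_sig i w =
     (let xs = snd w;
          r1 = fst w \<and> xs ! 0;
          r2 = r1 \<and> xs ! 1;
          r4 = r1 \<and> xs ! 2;
          f2 = r2 \<and> xs ! 3;
          f4 = r4 \<and> xs ! 4
      in if i = 1 then (if r1 then 1 else 0)
         else if i = 2 then (if r2 then 1 else 0)
         else if i = 4 then (if r4 then 1 else 0)
         else (if f2 then 1 else 0) + (if f4 then 2 else 0))"

definition cycle_net :: network where
  "cycle_net = \<lparr> narcs = 5, sig = cycle_sig,
                 sigset = (\<lambda>i. if i = 3 then {0,1,2,3} else {0,1}) \<rparr>"

text \<open>A (behavioural, possibly mixed) strategy profile: sigma i s = probability that agent i
  adopts after signal s.\<close>
definition valid_strategy :: "network \<Rightarrow> nat \<Rightarrow> (nat \<Rightarrow> real) \<Rightarrow> bool" where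
  "valid_strategy N i f \<longleftrightarrow> (\<forall>s\<in>sigset N i. 0 \<le> f s \<and> f s \<le> 1)"

definition valid_profile :: "network \<Rightarrow> (nat \<Rightarrow> nat \<Rightarrow> real) \<Rightarrow> bool" where
  "valid_profile N \<sigma> \<longleftrightarrow> (\<forall>i\<in>agents. valid_strategy N i (\<sigma> i))"

definition payoff :: "network \<Rightarrow> real \<Rightarrow> real \<Rightarrow> real \<Rightarrow> (nat \<Rightarrow> nat \<Rightarrow> real) \<Rightarrow> nat \<Rightarrow> real" where
  "payoff N \<rho> \<epsilon> c \<sigma> i =
     (\<Sum>w\<in>worlds (narcs N). wprob \<rho> \<epsilon> w * \<sigma> i (sig N i w) *
        ((if fst w then (\<Prod>j\<in>agents - {i}. \<sigma> j (sig N j w)) else 0) - c))"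

definition is_BNE :: "network \<Rightarrow> real \<Rightarrow> real \<Rightarrow> real \<Rightarrow> (nat \<Rightarrow> nat \<Rightarrow> real) \<Rightarrow> bool" where
  "is_BNE N \<rho> \<epsilon> c \<sigma> \<longleftrightarrow> valid_profile N \<sigma> \<and>
     (\<forall>i\<in>agents. \<forall>f. valid_strategy N i f \<longrightarrow>
        payoff N \<rho> \<epsilon> c (\<sigma>(i := f)) i \<le> payoff N \<rho> \<epsilon> c \<sigma> i)"

definition all_adopt_prob :: "network \<Rightarrow> real \<Rightarrow> real \<Rightarrow> (nat \<Rightarrow> nat \<Rightarrow> real) \<Rightarrow> real" where
  "all_adopt_prob N \<rho> \<epsilon> \<sigma> =
     (\<Sum>w\<in>worlds (narcs N). wprob \<rho> \<epsilon> w * (\<Prod>j\<in>agents. \<sigma> j (sig N j w)))"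

end

theory Submission
  imports Defs
begin

text \<open>
  In the line, adopting exactly on receipt is an equilibrium for costs c between 1/2 and
  (1 - \<epsilon>)^3: an informed agent only risks a loss further down the line, and an uninformed
  agent can only be pivotal if she is agent 4, which small \<epsilon> makes unprofitable.
  On the cycle with c > 1/2, agents 2 and 4 never adopt uninformed, since being uninformed
  mostly means the state is bad. Then agent 3 never adopts after a message from one side only,
  because the other side is uninformed with conditional probability above 1/2. So in every
  equilibrium of the cycle all four adopt only if agents 2 and 4 are informed and agent 3 hears
  both sides or neither, an event of probability
  \<rho>(1 - \<epsilon>)^3((1 - \<epsilon>)^2 + \<epsilon>^2) < \<rho>(1 - \<epsilon>)^4, the probability in the line.
\<close>

lemma sum_bool_lists_Suc:
  "(\<Sum>xs\<in>{xs::bool list. length xs = Suc n}. g xs)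
     = (\<Sum>xs\<in>{xs. length xs = n}. g (True # xs)) + (\<Sum>xs\<in>{xs. length xs = n}. g (False # xs))"
proof -
  have split: "{xs::bool list. length xs = Suc n}
      = Cons True ` {xs. length xs = n} \<union> Cons False ` {xs. length xs = n}"
    by (auto simp: length_Suc_conv)
  have "finite {xs::bool list. length xs = n}"
    using finite_lists_length_eq[of "UNIV :: bool set" n] by simp
  then show ?thesis
    unfolding split by (subst sum.union_disjoint) (auto simp: sum.reindex)
qed

lemma sum_worlds:
  "(\<Sum>w\<in>worlds n. f w) = (\<Sum>xs\<in>{xs. length xs = n}. f (True, xs) + f (False, xs))"
proof -
  have "(\<Sum>w\<in>worlds n. f w) = (\<Sum>t\<in>UNIV. \<Sum>xs\<in>{xs. length xs = n}. f (t, xs))"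
    unfolding worlds_def by (simp add: sum.cartesian_product)
  then show ?thesis
    by (simp add: UNIV_bool sum.distrib add.commute)
qed

lemmas worlds_sum_expand = numeral_eq_Suc sum_worlds sum_bool_lists_Suc wprob_def

lemma wprob_nonneg:
  assumes "0 \<le> \<rho>" "\<rho> \<le> 1" "0 \<le> \<epsilon>" "\<epsilon> \<le> 1"
  shows "0 \<le> wprob \<rho> \<epsilon> w"
proof -
  have "0 \<le> prod_list (map (\<lambda>x. if x then 1 - \<epsilon> else \<epsilon>) xs)" for xs
    by (induction xs) (use assms in auto)
  then show ?thesis
    using assms unfolding wprob_def by auto
qed

definition adopt_gain ::
    "network \<Rightarrow> real \<Rightarrow> real \<Rightarrow> real \<Rightarrow> (nat \<Rightarrow> nat \<Rightarrow> real) \<Rightarrow> nat \<Rightarrow> nat \<Rightarrow> real" where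
  "adopt_gain N \<rho> \<epsilon> c \<tau> i s =
     (\<Sum>w\<in>worlds (narcs N). if sig N i w = s then wprob \<rho> \<epsilon> w *
        ((if fst w then \<Prod>j\<in>agents - {i}. \<tau> j (sig N j w) else 0) - c) else 0)"

definition event_gain ::
    "network \<Rightarrow> real \<Rightarrow> real \<Rightarrow> real \<Rightarrow> nat \<Rightarrow> nat \<Rightarrow> (bool \<times> bool list \<Rightarrow> bool) \<Rightarrow> real" where
  "event_gain N \<rho> \<epsilon> c i s E =
     (\<Sum>w\<in>worlds (narcs N). if sig N i w = s then wprob \<rho> \<epsilon> w *
        ((if fst w \<and> E w then 1 else 0) - c) else 0)"

definition event_prob :: "network \<Rightarrow> real \<Rightarrow> real \<Rightarrow> (bool \<times> bool list \<Rightarrow> bool) \<Rightarrow> real" where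
  "event_prob N \<rho> \<epsilon> E = (\<Sum>w\<in>worlds (narcs N). wprob \<rho> \<epsilon> w * (if E w then 1 else 0))"

lemma payoff_drop_adoption:
  "payoff N \<rho> \<epsilon> c \<tau> i - payoff N \<rho> \<epsilon> c (\<tau>(i := (\<tau> i)(s := 0))) i
     = \<tau> i s * adopt_gain N \<rho> \<epsilon> c \<tau> i s"
proof -
  have others: "(\<Prod>j\<in>agents - {i}. (\<tau>(i := f)) j (sig N j w)) = (\<Prod>j\<in>agents - {i}. \<tau> j (sig N j w))"
    for f w by (rule prod.cong) auto
  show ?thesis
    unfolding payoff_def adopt_gain_def sum_subtractf[symmetric] sum_distrib_left
    by (rule sum.cong) (auto simp: others algebra_simps)
qed

lemma BNE_no_adoption_if_adopt_gain_neg: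
  assumes bne: "is_BNE N \<rho> \<epsilon> c \<tau>" and i: "i \<in> agents" and s: "s \<in> sigset N i"
    and gain: "adopt_gain N \<rho> \<epsilon> c \<tau> i s < 0"
  shows "\<tau> i s = 0"
proof -
  have valid: "valid_strategy N i (\<tau> i)"
    using bne i unfolding is_BNE_def valid_profile_def by auto
  then have "valid_strategy N i ((\<tau> i)(s := 0))"
    unfolding valid_strategy_def by auto
  then have "payoff N \<rho> \<epsilon> c (\<tau>(i := (\<tau> i)(s := 0))) i \<le> payoff N \<rho> \<epsilon> c \<tau> i"
    using bne i unfolding is_BNE_def by auto
  then have "0 \<le> \<tau> i s * adopt_gain N \<rho> \<epsilon> c \<tau> i s"
    using payoff_drop_adoption[of N \<rho> \<epsilon> c \<tau> i s] by linarith
  moreover have "0 \<le> \<tau> i s"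
    using valid s unfolding valid_strategy_def by auto
  ultimately show ?thesis
    using gain by (simp add: zero_le_mult_iff)
qed

lemma prod_le_indicator:
  fixes f :: "'a \<Rightarrow> 'b::linordered_idom"
  assumes "\<And>j. j \<in> A \<Longrightarrow> 0 \<le> f j \<and> f j \<le> 1" and "\<not> E \<Longrightarrow> \<exists>j\<in>A. f j = 0" and "finite A"
  shows "(\<Prod>j\<in>A. f j) \<le> (if E then 1 else 0)"
proof (cases E)
  case True
  then show ?thesis using assms(1) prod_le_1[of A f] by auto
next
  case False
  then obtain j where "j \<in> A" "f j = 0" using assms(2) by blast
  then have "(\<Prod>j\<in>A. f j) = 0" using assms(3) prod_zero_iff by blast
  then show ?thesis using False by simp
qed

lemma BNE_action_bounds:
  assumes "is_BNE N \<rho> \<epsilon> c \<tau>" and "j \<in> agents" and "s \<in> sigset N j"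
  shows "0 \<le> \<tau> j s \<and> \<tau> j s \<le> 1"
  using assms unfolding is_BNE_def valid_profile_def valid_strategy_def by auto

lemma BNE_no_adoption_if_event_gain_neg:
  assumes bne: "is_BNE N \<rho> \<epsilon> c \<tau>" and i: "i \<in> agents" and s: "s \<in> sigset N i"
    and probs: "0 \<le> \<rho>" "\<rho> \<le> 1" "0 \<le> \<epsilon>" "\<epsilon> \<le> 1"
    and signals: "\<And>j w. j \<in> agents \<Longrightarrow> sig N j w \<in> sigset N j"
    and blocked: "\<And>w. sig N i w = s \<Longrightarrow> \<not> E w \<Longrightarrow> \<exists>j\<in>agents - {i}. \<tau> j (sig N j w) = 0"
    and gain: "event_gain N \<rho> \<epsilon> c i s E < 0"
  shows "\<tau> i s = 0"
proof (rule BNE_no_adoption_if_adopt_gain_neg[OF bne i s])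
  have "adopt_gain N \<rho> \<epsilon> c \<tau> i s \<le> event_gain N \<rho> \<epsilon> c i s E"
    unfolding adopt_gain_def event_gain_def
  proof (rule sum_mono)
    fix w
    show "(if sig N i w = s then wprob \<rho> \<epsilon> w *
            ((if fst w then \<Prod>j\<in>agents - {i}. \<tau> j (sig N j w) else 0) - c) else 0)
        \<le> (if sig N i w = s then wprob \<rho> \<epsilon> w * ((if fst w \<and> E w then 1 else 0) - c) else 0)"
    proof (cases "sig N i w = s")
      case True
      have "(\<Prod>j\<in>agents - {i}. \<tau> j (sig N j w)) \<le> (if E w then 1 else 0)"
        using BNE_action_bounds[OF bne] signals blocked[OF True]
        by (intro prod_le_indicator) (auto simp: agents_def)
      then have "(if fst w then \<Prod>j\<in>agents - {i}. \<tau> j (sig N j w) else 0) - c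
          \<le> (if fst w \<and> E w then 1 else 0) - c"
        by auto
      then show ?thesis
        using True wprob_nonneg[OF probs, of w] by (simp add: mult_left_mono)
    qed simp
  qed
  with gain show "adopt_gain N \<rho> \<epsilon> c \<tau> i s < 0" by linarith
qed

lemma BNE_all_adopt_prob_le_event_prob:
  assumes bne: "is_BNE N \<rho> \<epsilon> c \<tau>"
    and probs: "0 \<le> \<rho>" "\<rho> \<le> 1" "0 \<le> \<epsilon>" "\<epsilon> \<le> 1"
    and signals: "\<And>j w. j \<in> agents \<Longrightarrow> sig N j w \<in> sigset N j"
    and blocked: "\<And>w. \<not> E w \<Longrightarrow> \<exists>j\<in>agents. \<tau> j (sig N j w) = 0"
  shows "all_adopt_prob N \<rho> \<epsilon> \<tau> \<le> event_prob N \<rho> \<epsilon> E"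
  unfolding all_adopt_prob_def event_prob_def
proof (rule sum_mono)
  fix w
  have "(\<Prod>j\<in>agents. \<tau> j (sig N j w)) \<le> (if E w then 1 else 0)"
    using BNE_action_bounds[OF bne] signals blocked
    by (intro prod_le_indicator) (auto simp: agents_def)
  then show "wprob \<rho> \<epsilon> w * (\<Prod>j\<in>agents. \<tau> j (sig N j w)) \<le> wprob \<rho> \<epsilon> w * (if E w then 1 else 0)"
    using wprob_nonneg[OF probs, of w] by (rule mult_left_mono)
qed

definition adopt_on_receipt :: "nat \<Rightarrow> nat \<Rightarrow> real" where
  "adopt_on_receipt i s = (if s = 1 then 1 else 0)"

lemma prod_agents:
  fixes g :: "nat \<Rightarrow> 'a::comm_monoid_mult"
  shows "(\<Prod>j\<in>agents. g j) = g 1 * (g 2 * (g 3 * g 4))"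
    and "(\<Prod>j\<in>agents - {1}. g j) = g 2 * (g 3 * g 4)"
    and "(\<Prod>j\<in>agents - {2}. g j) = g 1 * (g 3 * g 4)"
    and "(\<Prod>j\<in>agents - {3}. g j) = g 1 * (g 2 * g 4)"
    and "(\<Prod>j\<in>agents - {4}. g j) = g 1 * (g 2 * g 3)"
  by (simp_all add: agents_def insert_Diff_if)

lemma line_sig_agents:
  "line_sig 1 w = (if fst w \<and> snd w ! 0 then 1 else 0)"
  "line_sig 2 w = (if fst w \<and> snd w ! 0 \<and> snd w ! 1 then 1 else 0)"
  "line_sig 3 w = (if fst w \<and> snd w ! 0 \<and> snd w ! 1 \<and> snd w ! 2 then 1 else 0)"
  "line_sig 4 w = (if fst w \<and> snd w ! 0 \<and> snd w ! 1 \<and> snd w ! 2 \<and> snd w ! 3 then 1 else 0)"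
  unfolding line_sig_def by (auto simp: numeral_eq_Suc less_Suc_eq)

text \<open>
  An uninformed agent i < 4 knows that the message never reached the agents after her, so
  only agent 4 can be pivotal without a message.
\<close>

lemma payoff_line_deviation:
  assumes "i \<in> agents"
  shows "payoff line_net \<rho> \<epsilon> c (adopt_on_receipt(i := f)) i
    = f 1 * (\<rho> * (1 - \<epsilon>) ^ 4 - c * \<rho> * (1 - \<epsilon>) ^ i)
      + f 0 * ((if i = 4 then \<rho> * (1 - \<epsilon>) ^ 3 * \<epsilon> else 0) - c * (1 - \<rho> * (1 - \<epsilon>) ^ i))"
proof -
  have "i = 1 \<or> i = 2 \<or> i = 3 \<or> i = 4" using assms by (auto simp: agents_def)
  then show ?thesis
    unfolding payoff_def line_net_def network.select_convs adopt_on_receipt_def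
    by (elim disjE; simp only: prod_agents line_sig_agents;
        simp add: worlds_sum_expand del: One_nat_def; simp add: algebra_simps eval_nat_numeral)
qed

lemma all_adopt_prob_line:
  "all_adopt_prob line_net \<rho> \<epsilon> adopt_on_receipt = \<rho> * (1 - \<epsilon>) ^ 4"
  unfolding all_adopt_prob_def line_net_def network.select_convs adopt_on_receipt_def
    prod_agents line_sig_agents
  by (simp add: worlds_sum_expand del: One_nat_def)

lemma adopt_on_receipt_is_BNE_line:
  assumes \<rho>: "0 \<le> \<rho>" "\<rho> \<le> 1" and \<epsilon>: "0 \<le> \<epsilon>" "\<epsilon> \<le> 1"
    and c: "0 \<le> c" "c \<le> (1 - \<epsilon>) ^ 3"
    and last_agent: "\<rho> * (1 - \<epsilon>) ^ 3 * \<epsilon> \<le> c * (1 - \<rho> * (1 - \<epsilon>) ^ 4)"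
  shows "is_BNE line_net \<rho> \<epsilon> c adopt_on_receipt"
  unfolding is_BNE_def
proof (intro conjI ballI allI impI)
  show "valid_profile line_net adopt_on_receipt"
    unfolding valid_profile_def valid_strategy_def adopt_on_receipt_def by auto
next
  fix i f assume i: "i \<in> agents" and f: "valid_strategy line_net i f"
  have f01: "0 \<le> f 0" "f 0 \<le> 1" "0 \<le> f 1" "f 1 \<le> 1"
    using f unfolding valid_strategy_def line_net_def by auto
  define d where "d = 1 - \<epsilon>"
  have d: "0 \<le> d" "d \<le> 1" using \<epsilon> unfolding d_def by auto
  have i14: "1 \<le> i" "i \<le> 4" using i unfolding agents_def by auto
  define Y where "Y = \<rho> * d ^ 4 - c * \<rho> * d ^ i"
  define Z where "Z = (if i = 4 then \<rho> * d ^ 3 * \<epsilon> else 0) - c * (1 - \<rho> * d ^ i)"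
  have "d ^ 3 \<le> d ^ (4 - i)"
    using d i14 by (intro power_decreasing) auto
  then have "c * d ^ i \<le> d ^ (4 - i) * d ^ i"
    using c d by (intro mult_right_mono) (auto simp: d_def)
  also have "\<dots> = d ^ 4" using i14 by (simp flip: power_add)
  finally have "0 \<le> Y"
    unfolding Y_def using mult_left_mono[of "c * d ^ i" "d ^ 4" \<rho>] \<rho> by (simp add: algebra_simps)
  moreover have "Z \<le> 0"
  proof -
    have "\<rho> * d ^ i \<le> 1" using \<rho> d by (simp add: mult_le_one power_le_one)
    then show ?thesis using c last_agent unfolding Z_def d_def by auto
  qed
  moreover have deviation: "payoff line_net \<rho> \<epsilon> c (adopt_on_receipt(i := g)) i = g 1 * Y + g 0 * Z" for g
    using payoff_line_deviation[OF i] unfolding Y_def Z_def d_def .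
  ultimately have "payoff line_net \<rho> \<epsilon> c (adopt_on_receipt(i := f)) i \<le> Y"
    using f01 by (smt (verit) mult_left_le_one_le mult_nonneg_nonpos)
  also have "Y = payoff line_net \<rho> \<epsilon> c adopt_on_receipt i"
    using deviation[of "adopt_on_receipt i"] by (simp add: adopt_on_receipt_def)
  finally show "payoff line_net \<rho> \<epsilon> c (adopt_on_receipt(i := f)) i \<le> payoff line_net \<rho> \<epsilon> c adopt_on_receipt i" .
qed

lemma sig_cycle_net [simp]: "sig cycle_net = cycle_sig"
  and sigset_cycle_net [simp]: "sigset cycle_net j = (if j = 3 then {0, 1, 2, 3} else {0, 1})"
  by (simp_all add: cycle_net_def)

lemma cycle_sig_range:
  "cycle_sig 1 w \<in> {0, 1}" "cycle_sig 2 w \<in> {0, 1}" "cycle_sig 4 w \<in> {0, 1}"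
  "cycle_sig 3 w \<in> {0, 1, 2, 3}"
  by (simp_all add: cycle_sig_def Let_def)

lemma cycle_sig_in_sigset: "j \<in> agents \<Longrightarrow> sig cycle_net j w \<in> sigset cycle_net j"
  using cycle_sig_range[of w] by (auto simp: agents_def)

lemma event_gain_cycle_unreached:
  "event_gain cycle_net \<rho> \<epsilon> c 2 0 (\<lambda>_. True) = \<rho> * (\<epsilon> * (2 - \<epsilon>)) * (1 - c) - c * (1 - \<rho>)"
  "event_gain cycle_net \<rho> \<epsilon> c 4 0 (\<lambda>_. True) = \<rho> * (\<epsilon> * (2 - \<epsilon>)) * (1 - c) - c * (1 - \<rho>)"
  unfolding event_gain_def
  by (simp add: worlds_sum_expand cycle_net_def cycle_sig_def, simp add: algebra_simps)+

lemma event_gain_cycle_one_path: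
  "event_gain cycle_net \<rho> \<epsilon> c 3 1 (\<lambda>w. cycle_sig 4 w = 1)
     = \<rho> * (1 - \<epsilon>) ^ 3 * \<epsilon> * ((1 - \<epsilon>) - c * (2 - \<epsilon>))"
  "event_gain cycle_net \<rho> \<epsilon> c 3 2 (\<lambda>w. cycle_sig 2 w = 1)
     = \<rho> * (1 - \<epsilon>) ^ 3 * \<epsilon> * ((1 - \<epsilon>) - c * (2 - \<epsilon>))"
  unfolding event_gain_def
  by (simp add: worlds_sum_expand cycle_net_def cycle_sig_def del: One_nat_def,
      simp add: algebra_simps eval_nat_numeral)+

lemma event_prob_cycle_consistent:
  "event_prob cycle_net \<rho> \<epsilon>
      (\<lambda>w. cycle_sig 2 w = 1 \<and> cycle_sig 4 w = 1 \<and> (cycle_sig 3 w = 0 \<or> cycle_sig 3 w = 3))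
     = \<rho> * (1 - \<epsilon>) ^ 3 * ((1 - \<epsilon>) ^ 2 + \<epsilon> ^ 2)"
  unfolding event_prob_def
  by (simp add: worlds_sum_expand cycle_net_def cycle_sig_def del: One_nat_def,
      simp add: algebra_simps eval_nat_numeral)

lemma cycle_BNE_no_adoption_unreached:
  assumes \<rho>: "0 < \<rho>" "\<rho> < 1" and \<epsilon>: "0 < \<epsilon>" "\<epsilon> < 1" and c: "1/2 < c"
    and cost_dominates: "2 * (\<rho> * \<epsilon>) < c * (1 - \<rho>)"
    and bne: "is_BNE cycle_net \<rho> \<epsilon> c \<tau>"
  shows "\<tau> 2 0 = 0" and "\<tau> 4 0 = 0"
proof -
  have "\<rho> * (\<epsilon> * (2 - \<epsilon>)) * (1 - c) \<le> \<rho> * (\<epsilon> * (2 - \<epsilon>)) * (1/2)"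
    using \<rho> \<epsilon> c by (intro mult_left_mono) auto
  also have "\<dots> = (\<rho> * \<epsilon>) * ((2 - \<epsilon>) / 2)"
    by simp
  also have "\<dots> \<le> \<rho> * \<epsilon>"
    using \<rho> \<epsilon> by (intro mult_left_le) auto
  finally have "event_gain cycle_net \<rho> \<epsilon> c 2 0 (\<lambda>_. True) < 0"
    and "event_gain cycle_net \<rho> \<epsilon> c 4 0 (\<lambda>_. True) < 0"
    unfolding event_gain_cycle_unreached
    using cost_dominates mult_pos_pos[OF \<rho>(1) \<epsilon>(1)] by linarith+
  then show "\<tau> 2 0 = 0" and "\<tau> 4 0 = 0"
    using \<rho> \<epsilon> by (auto intro!: BNE_no_adoption_if_event_gain_neg[OF bne _ _ _ _ _ _ cycle_sig_in_sigset]
        simp: agents_def)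
qed

lemma cycle_BNE_no_adoption_one_path:
  assumes \<rho>: "0 < \<rho>" "\<rho> < 1" and \<epsilon>: "0 < \<epsilon>" "\<epsilon> < 1" and c: "1/2 < c"
    and bne: "is_BNE cycle_net \<rho> \<epsilon> c \<tau>" and silent: "\<tau> 2 0 = 0" "\<tau> 4 0 = 0"
  shows "\<tau> 3 1 = 0" and "\<tau> 3 2 = 0"
proof -
  txt \<open>The other neighbour is informed with conditional probability (1 - \<epsilon>) / (2 - \<epsilon>) < 1/2.\<close>
  have "(2 - \<epsilon>) / 2 < c * (2 - \<epsilon>)"
    using mult_strict_right_mono[OF c, of "2 - \<epsilon>"] \<epsilon> by simp
  moreover have "1 - \<epsilon> < (2 - \<epsilon>) / 2"
    using \<epsilon> by simp
  ultimately have "(1 - \<epsilon>) - c * (2 - \<epsilon>) < 0"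
    by linarith
  then have "\<rho> * (1 - \<epsilon>) ^ 3 * \<epsilon> * ((1 - \<epsilon>) - c * (2 - \<epsilon>)) < 0"
    using \<rho> \<epsilon> by (intro mult_pos_neg) auto
  then have gain: "event_gain cycle_net \<rho> \<epsilon> c 3 1 (\<lambda>w. cycle_sig 4 w = 1) < 0"
    "event_gain cycle_net \<rho> \<epsilon> c 3 2 (\<lambda>w. cycle_sig 2 w = 1) < 0"
    by (simp_all only: event_gain_cycle_one_path)
  have blocked: "\<exists>j\<in>agents - {3}. \<tau> j (sig cycle_net j w) = 0"
    if j: "j \<in> {2, 4}" and "cycle_sig j w \<noteq> 1" for j w
  proof
    have "cycle_sig j w = 0" using that cycle_sig_range[of w] by auto
    then show "\<tau> j (sig cycle_net j w) = 0" using j silent by auto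
    show "j \<in> agents - {3}" using j by (auto simp: agents_def)
  qed
  show "\<tau> 3 1 = 0"
    using \<rho> \<epsilon> gain blocked[of 4]
    by (intro BNE_no_adoption_if_event_gain_neg[OF bne _ _ _ _ _ _ cycle_sig_in_sigset,
          where E = "\<lambda>w. cycle_sig 4 w = 1"])
      (auto simp: agents_def)
  show "\<tau> 3 2 = 0"
    using \<rho> \<epsilon> gain blocked[of 2]
    by (intro BNE_no_adoption_if_event_gain_neg[OF bne _ _ _ _ _ _ cycle_sig_in_sigset,
          where E = "\<lambda>w. cycle_sig 2 w = 1"])
      (auto simp: agents_def)
qed

lemma all_adopt_prob_cycle_BNE_less:
  assumes \<rho>: "0 < \<rho>" "\<rho> < 1" and \<epsilon>: "0 < \<epsilon>" "\<epsilon> < 1/2" and c: "1/2 < c"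
    and cost_dominates: "2 * (\<rho> * \<epsilon>) < c * (1 - \<rho>)"
    and bne: "is_BNE cycle_net \<rho> \<epsilon> c \<tau>"
  shows "all_adopt_prob cycle_net \<rho> \<epsilon> \<tau> < \<rho> * (1 - \<epsilon>) ^ 4"
proof -
  have \<epsilon>1: "\<epsilon> < 1" using \<epsilon> by simp
  note unreached = cycle_BNE_no_adoption_unreached[OF \<rho> \<epsilon>(1) \<epsilon>1 c cost_dominates bne]
  note one_path = cycle_BNE_no_adoption_one_path[OF \<rho> \<epsilon>(1) \<epsilon>1 c bne unreached]
  let ?consistent = "\<lambda>w. cycle_sig 2 w = 1 \<and> cycle_sig 4 w = 1 \<and> (cycle_sig 3 w = 0 \<or> cycle_sig 3 w = 3)"
  have "all_adopt_prob cycle_net \<rho> \<epsilon> \<tau> \<le> event_prob cycle_net \<rho> \<epsilon> ?consistent"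
  proof (rule BNE_all_adopt_prob_le_event_prob[OF bne _ _ _ _ cycle_sig_in_sigset])
    fix w
    assume "\<not> ?consistent w"
    then show "\<exists>j\<in>agents. \<tau> j (sig cycle_net j w) = 0"
      using cycle_sig_range[of w] unreached one_path by (auto simp: agents_def)
  qed (use \<rho> \<epsilon> in auto)
  also have "\<dots> = \<rho> * (1 - \<epsilon>) ^ 3 * ((1 - \<epsilon>) ^ 2 + \<epsilon> ^ 2)"
    by (rule event_prob_cycle_consistent)
  also have "\<dots> < \<rho> * (1 - \<epsilon>) ^ 4"
  proof -
    have "\<rho> * (1 - \<epsilon>) ^ 3 * (\<epsilon> * (2 * \<epsilon> - 1)) < 0"
      using \<rho> \<epsilon> by (intro mult_pos_neg) auto
    moreover have "\<rho> * (1 - \<epsilon>) ^ 3 * ((1 - \<epsilon>) ^ 2 + \<epsilon> ^ 2) - \<rho> * (1 - \<epsilon>) ^ 4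
        = \<rho> * (1 - \<epsilon>) ^ 3 * (\<epsilon> * (2 * \<epsilon> - 1))"
      by (simp add: algebra_simps eval_nat_numeral)
    ultimately show ?thesis by simp
  qed
  finally show ?thesis .
qed

lemma line_beats_cycle:
  assumes \<rho>: "0 < \<rho>" "\<rho> < 1" and \<epsilon>: "0 < \<epsilon>" "\<epsilon> < 1/2"
    and c: "1/2 < c" "c \<le> (1 - \<epsilon>) ^ 3" and small: "8 * (\<rho> * \<epsilon>) < 1 - \<rho>"
  shows "is_BNE line_net \<rho> \<epsilon> c adopt_on_receipt \<and>
    (\<forall>\<tau>. is_BNE cycle_net \<rho> \<epsilon> c \<tau> \<longrightarrow>
       all_adopt_prob cycle_net \<rho> \<epsilon> \<tau> < all_adopt_prob line_net \<rho> \<epsilon> adopt_on_receipt)"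
proof (intro conjI allI impI)
  have "(1 - \<rho>) / 2 < c * (1 - \<rho>)"
    using mult_strict_right_mono[OF c(1), of "1 - \<rho>"] \<rho> by simp
  moreover have "4 * (\<rho> * \<epsilon>) < (1 - \<rho>) / 2"
    using small by simp
  ultimately have cost: "4 * (\<rho> * \<epsilon>) < c * (1 - \<rho>)"
    by linarith
  have powers: "(1 - \<epsilon>) ^ 3 \<le> 1" "(1 - \<epsilon>) ^ 4 \<le> 1"
    using \<epsilon> by (simp_all add: power_le_one)
  have "\<rho> * (1 - \<epsilon>) ^ 3 * \<epsilon> \<le> \<rho> * \<epsilon>"
    using \<rho> \<epsilon> powers by (simp add: mult_le_cancel_right1 mult_left_le)
  also have "\<dots> \<le> c * (1 - \<rho>)"
    using cost mult_pos_pos[OF \<rho>(1) \<epsilon>(1)] by linarith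
  also have "\<dots> \<le> c * (1 - \<rho> * (1 - \<epsilon>) ^ 4)"
    using \<rho> c powers by (intro mult_left_mono) (auto simp: mult_left_le)
  finally show "is_BNE line_net \<rho> \<epsilon> c adopt_on_receipt"
    using \<rho> \<epsilon> c by (intro adopt_on_receipt_is_BNE_line) auto
  have "2 * (\<rho> * \<epsilon>) < c * (1 - \<rho>)"
    using cost mult_pos_pos[OF \<rho>(1) \<epsilon>(1)] by linarith
  then show "all_adopt_prob cycle_net \<rho> \<epsilon> \<tau> < all_adopt_prob line_net \<rho> \<epsilon> adopt_on_receipt"
    if "is_BNE cycle_net \<rho> \<epsilon> c \<tau>" for \<tau>
    unfolding all_adopt_prob_line
    using \<rho> \<epsilon> c that by (intro all_adopt_prob_cycle_BNE_less) auto
qed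

theorem mainTheorem9:
  fixes \<rho> :: real
  assumes "0 < \<rho>" and "\<rho> < 1"
  shows "\<exists>\<epsilon>0>0. \<forall>\<epsilon>::real. 0 < \<epsilon> \<and> \<epsilon> < 1 \<and> \<epsilon> < \<epsilon>0 \<longrightarrow>
           (\<exists>a b::real. 0 \<le> a \<and> a < b \<and> b \<le> 1 \<and>
              (\<forall>c. a < c \<and> c < b \<longrightarrow>
                 (\<exists>\<sigma>. is_BNE line_net \<rho> \<epsilon> c \<sigma> \<and>
                    (\<forall>\<tau>. is_BNE cycle_net \<rho> \<epsilon> c \<tau> \<longrightarrow>
                       all_adopt_prob cycle_net \<rho> \<epsilon> \<tau> < all_adopt_prob line_net \<rho> \<epsilon> \<sigma>))))"
proof (rule exI[of _ "min (1/10) ((1 - \<rho>) / (8 * \<rho>))"], intro conjI allI impI)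
  show "0 < min (1/10) ((1 - \<rho>) / (8 * \<rho>))"
    using assms by auto
  fix \<epsilon> :: real
  assume \<epsilon>: "0 < \<epsilon> \<and> \<epsilon> < 1 \<and> \<epsilon> < min (1/10) ((1 - \<rho>) / (8 * \<rho>))"
  then have small: "8 * (\<rho> * \<epsilon>) < 1 - \<rho>"
    using assms by (simp add: pos_less_divide_eq mult.commute)
  have "(9/10 :: real) ^ 3 \<le> (1 - \<epsilon>) ^ 3"
    using \<epsilon> by (intro power_mono) auto
  then have "1/2 < (1 - \<epsilon>) ^ 3"
    by (simp add: eval_nat_numeral)
  moreover have "(1 - \<epsilon>) ^ 3 \<le> 1"
    using \<epsilon> by (simp add: power_le_one)
  ultimately show "\<exists>a b::real. 0 \<le> a \<and> a < b \<and> b \<le> 1 \<and>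
      (\<forall>c. a < c \<and> c < b \<longrightarrow> (\<exists>\<sigma>. is_BNE line_net \<rho> \<epsilon> c \<sigma> \<and>
        (\<forall>\<tau>. is_BNE cycle_net \<rho> \<epsilon> c \<tau> \<longrightarrow>
           all_adopt_prob cycle_net \<rho> \<epsilon> \<tau> < all_adopt_prob line_net \<rho> \<epsilon> \<sigma>)))"
    using line_beats_cycle[OF assms] \<epsilon> small
    by (intro exI[of _ "1/2"] exI[of _ "(1 - \<epsilon>) ^ 3"]) (auto intro!: exI[of _ adopt_on_receipt])
qed

end
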